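(* If $Z\subseteq A^+$ is a regular language which is a strong alt-induced code, then there are only finitely many strong alternative codes $(X,Y)$ with $XY=Z$.
   Context: $A$ is a finite alphabet, $A^*$ the set of words, $A^+$ the non-empty words, $XY=\{xy:x\in X,y\in Y\}$. For $X,Z\subseteq A^*$: $X^{-1}Z=\{u\in A^*: xu\in Z \text{ for some } x\in X\}$, $ZY^{-1}=\{u\in A^*: uy\in Z\text{ for some } y\in Y\}$. A code is a subset of $A^+$ in which every word has at most one factorization into its elements. For non-empty $X,Y\subseteq A^+$, $(X,Y)$ is an alternative code if $XY$ is a code and each element of $XY$ has exactly one factorization $xy$ with $x\in X,y\in Y$ (equivalently, no word admits two different similar alternative factorizations on $(X,Y)$). It is a strong alternative code if moreover $X^{-1}(XY)\subseteq Y$ and $(XY)Y^{-1}\subseteq X$. $Z$ is a strong alt-induced code if $Z=XY$ for some strong alternative code $(X,Y)$. *)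

theory Defs
  imports Main
begin

definition conc :: "'a list set \<Rightarrow> 'a list set \<Rightarrow> 'a list set" where
  "conc X Y = {x @ y | x y. x \<in> X \<and> y \<in> Y}"

definition nonempty_words :: "'a list set" where
  "nonempty_words = {w. w \<noteq> []}"

definition lquot :: "'a list set \<Rightarrow> 'a list set \<Rightarrow> 'a list set" where
  "lquot X Z = {u. \<exists>x\<in>X. x @ u \<in> Z}"

definition rquot :: "'a list set \<Rightarrow> 'a list set \<Rightarrow> 'a list set" where
  "rquot Z Y = {u. \<exists>y\<in>Y. u @ y \<in> Z}"

definition code :: "'a list set \<Rightarrow> bool" where
  "code C \<longleftrightarrow> C \<subseteq> nonempty_words \<and>
     (\<forall>xs ys. set xs \<subseteq> C \<longrightarrow> set ys \<subseteq> C \<longrightarrow> concat xs = concat ys \<longrightarrow> xs = ys)"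

definition alt_code :: "'a list set \<Rightarrow> 'a list set \<Rightarrow> bool" where
  "alt_code X Y \<longleftrightarrow> X \<noteq> {} \<and> Y \<noteq> {} \<and> X \<subseteq> nonempty_words \<and> Y \<subseteq> nonempty_words \<and>
     code (conc X Y) \<and>
     (\<forall>x y x' y'. x \<in> X \<longrightarrow> y \<in> Y \<longrightarrow> x' \<in> X \<longrightarrow> y' \<in> Y \<longrightarrow> x @ y = x' @ y'
        \<longrightarrow> x = x' \<and> y = y')"

definition strong_alt_code :: "'a list set \<Rightarrow> 'a list set \<Rightarrow> bool" where
  "strong_alt_code X Y \<longleftrightarrow> alt_code X Y \<and>
     lquot X (conc X Y) \<subseteq> Y \<and> rquot (conc X Y) Y \<subseteq> X"

definition strong_alt_induced :: "'a list set \<Rightarrow> bool" where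
  "strong_alt_induced Z \<longleftrightarrow> (\<exists>X Y. strong_alt_code X Y \<and> Z = conc X Y)"

definition regular :: "'a list set \<Rightarrow> bool" where
  "regular L \<longleftrightarrow> (\<exists>(n::nat) (q0::nat) (delta :: nat \<Rightarrow> 'a \<Rightarrow> nat) (F :: nat set).
      q0 < n \<and> (\<forall>q a. q < n \<longrightarrow> delta q a < n) \<and>
      L = {w. foldl delta q0 w \<in> F})"

end

theory Submission
  imports Defs
begin

text \<open>A strong alternative code (X, Y) is recovered from Z = XY as Y = X\<inverse>Z and
  X = ZY\<inverse>. Hence Y is a left quotient of Z, and a regular language has only
  finitely many left quotients: X\<inverse>Z is the union of the residual languages of Z
  at the states reached by the words of X, so it is determined by a set of states.\<close>

lemma foldl_less:
  assumes "q < n" and "\<And>q a. q < n \<Longrightarrow> delta q a < n"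
  shows "foldl delta q w < (n::nat)"
  using assms by (induction w arbitrary: q) auto

lemma finite_lquots_regular:
  assumes "regular Z"
  shows "finite (range (\<lambda>X. lquot X Z))"
proof -
  obtain n q0 delta F where q0: "q0 < (n::nat)" and delta: "\<forall>q a. q < n \<longrightarrow> delta q a < n"
    and Z: "Z = {w. foldl delta q0 w \<in> F}"
    using assms unfolding regular_def by blast
  define residual where "residual q = {w. foldl delta q w \<in> F}" for q
  have "lquot X Z \<in> (\<lambda>P. \<Union> (residual ` P)) ` Pow {..<n}" for X
  proof (rule image_eqI)
    show "lquot X Z = \<Union> (residual ` (foldl delta q0 ` X))"
      unfolding lquot_def residual_def Z by auto
    show "foldl delta q0 ` X \<in> Pow {..<n}"
      using foldl_less[OF q0] delta by auto
  qed
  then have "range (\<lambda>X. lquot X Z) \<subseteq> (\<lambda>P. \<Union> (residual ` P)) ` Pow {..<n}"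
    by blast
  then show ?thesis
    by (rule finite_subset) simp
qed

lemma strong_alt_code_lquot_eq:
  assumes "strong_alt_code X Y"
  shows "lquot X (conc X Y) = Y"
proof
  show "lquot X (conc X Y) \<subseteq> Y"
    using assms unfolding strong_alt_code_def by blast
  from assms obtain x where "x \<in> X"
    unfolding strong_alt_code_def alt_code_def by blast
  then show "Y \<subseteq> lquot X (conc X Y)"
    unfolding lquot_def conc_def by blast
qed

lemma strong_alt_code_rquot_eq:
  assumes "strong_alt_code X Y"
  shows "rquot (conc X Y) Y = X"
proof
  show "rquot (conc X Y) Y \<subseteq> X"
    using assms unfolding strong_alt_code_def by blast
  from assms obtain y where "y \<in> Y"
    unfolding strong_alt_code_def alt_code_def by blast
  then show "X \<subseteq> rquot (conc X Y) Y"
    unfolding rquot_def conc_def by blast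
qed

theorem theoremT:
  fixes Z :: "('a::finite) list set"
  assumes "regular Z"
    and "Z \<subseteq> nonempty_words"
    and "strong_alt_induced Z"
  shows "finite {(X, Y). strong_alt_code X Y \<and> conc X Y = Z}"
proof -
  have "(X, Y) \<in> (\<lambda>Y. (rquot Z Y, Y)) ` range (\<lambda>X. lquot X Z)"
    if "strong_alt_code X Y" and "conc X Y = Z" for X Y
  proof -
    have "Y = lquot X Z" and "X = rquot Z Y"
      using that strong_alt_code_lquot_eq[of X Y] strong_alt_code_rquot_eq[of X Y] by simp_all
    then show ?thesis
      by blast
  qed
  then have "{(X, Y). strong_alt_code X Y \<and> conc X Y = Z}
      \<subseteq> (\<lambda>Y. (rquot Z Y, Y)) ` range (\<lambda>X. lquot X Z)"
    by auto
  moreover have "finite ((\<lambda>Y. (rquot Z Y, Y)) ` range (\<lambda>X. lquot X Z))"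
    using finite_lquots_regular[OF assms(1)] by (rule finite_imageI)
  ultimately show ?thesis
    by (rule finite_subset)
qed

end
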